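(* Let $\{P_v\}_{v\in\mathcal{V}}$ be a family of distributions indexed by $\mathcal{V}=\{0,1\}^\infty$, let $\alpha\in[0,1)$, and let $\hat V$ be an $(\alpha,\{n_k\})$-test sequence for this family. Then for all $v\in\mathcal{V}$, $$\sum_{k=1}^\infty\mathsf{CondErr}(\hat V,v,k)\le\frac{\alpha}{1-\alpha}.$$
   Context: $\mathbb{P}_v$ denotes the probability under which $X_1,X_2,\dots$ are i.i.d. $P_v$. A sequence of $\{0,1\}$-valued tests $\{\hat V_k\}$, $\hat V_k$ a function of $X_{1:n_k}$, is an $(\alpha,\{n_k\})$-test if for all $v\in\mathcal{V}$, $\mathbb{P}_v(\hat V_k(X_{1:n_k})=v_k\text{ for all }k\in\mathbb{N})\ge1-\alpha$. $\mathsf{CondErr}(\hat V,v,k):=\mathbb{P}_v(\hat V_k\ne v_k\mid\hat V_{1:k-1}=v_{1:k-1})$, where $v_{1:k-1}=(v_1,\dots,v_{k-1})$. *)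

theory Defs
  imports "HOL-Probability.Probability"
begin

text \<open>Sample space: infinite sequences X_0, X_1, ... (0-indexed) of observations in the
  measurable space underlying the distributions.\<close>

definition iidP :: "('v \<Rightarrow> 'a measure) \<Rightarrow> 'v \<Rightarrow> (nat \<Rightarrow> 'a) measure" where
  "iidP P v = (\<Pi>\<^sub>M i\<in>(UNIV::nat set). P v)"

text \<open>The k-th test evaluated on the first n k observations X_{1:n_k}
  (represented as the restriction of the sample to indices below n k).\<close>

definition test_out :: "(nat \<Rightarrow> (nat \<Rightarrow> 'a) \<Rightarrow> bool) \<Rightarrow> (nat \<Rightarrow> nat) \<Rightarrow> nat \<Rightarrow> (nat \<Rightarrow> 'a) \<Rightarrow> bool" where
  "test_out T n k \<omega> = T k (restrict \<omega> {..<n k})"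

definition is_alpha_test ::
  "((nat \<Rightarrow> bool) \<Rightarrow> 'a measure) \<Rightarrow> real \<Rightarrow> (nat \<Rightarrow> nat) \<Rightarrow> (nat \<Rightarrow> (nat \<Rightarrow> 'a) \<Rightarrow> bool) \<Rightarrow> bool" where
  "is_alpha_test P \<alpha> n T \<longleftrightarrow>
     (\<forall>v. measure (iidP P v) {\<omega> \<in> space (iidP P v). \<forall>k. test_out T n k \<omega> = v k} \<ge> 1 - \<alpha>)"

definition CondErr ::
  "((nat \<Rightarrow> bool) \<Rightarrow> 'a measure) \<Rightarrow> (nat \<Rightarrow> nat) \<Rightarrow> (nat \<Rightarrow> (nat \<Rightarrow> 'a) \<Rightarrow> bool) \<Rightarrow> (nat \<Rightarrow> bool) \<Rightarrow> nat \<Rightarrow> real" where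
  "CondErr P n T v k =
     measure (iidP P v) {\<omega> \<in> space (iidP P v). (\<forall>j<k. test_out T n j \<omega> = v j) \<and> test_out T n k \<omega> \<noteq> v k}
     / measure (iidP P v) {\<omega> \<in> space (iidP P v). \<forall>j<k. test_out T n j \<omega> = v j}"

end

theory Submission
  imports Defs
begin

text \<open>Let \<open>p k\<close> be the probability that the first \<open>k\<close> tests are correct. Then
  \<open>CondErr k = (p k - p (k+1)) / p k\<close>, and every \<open>p k\<close> is at least the probability
  \<open>1 - \<alpha>\<close> that all tests are correct. Bounding each denominator by \<open>1 - \<alpha>\<close> makes the
  series telescope, giving at most \<open>(p 0 - (1 - \<alpha>)) / (1 - \<alpha>) \<le> \<alpha> / (1 - \<alpha>)\<close>.\<close>

lemma relative_decrements_summable_le: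
  fixes p :: "nat \<Rightarrow> real"
  assumes dec: "\<And>k. p (Suc k) \<le> p k"
    and lower: "\<And>k. c \<le> p k"
    and "0 < c"
  shows "summable (\<lambda>k. (p k - p (Suc k)) / p k) \<and> (\<Sum>k. (p k - p (Suc k)) / p k) \<le> (p 0 - c) / c"
proof -
  have pos: "0 < p k" for k
    using \<open>0 < c\<close> lower[of k] by linarith
  have nonneg: "0 \<le> (p k - p (Suc k)) / p k" for k
    using dec[of k] pos[of k] by simp
  have partial_le: "(\<Sum>k<N. (p k - p (Suc k)) / p k) \<le> (p 0 - c) / c" for N
  proof -
    have "(\<Sum>k<N. (p k - p (Suc k)) / p k) \<le> (\<Sum>k<N. (p k - p (Suc k)) / c)"
      using dec lower pos \<open>0 < c\<close> by (intro sum_mono divide_left_mono) auto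
    also have "\<dots> = (p 0 - p N) / c"
      by (simp add: sum_divide_distrib[symmetric] sum_lessThan_telescope')
    also have "\<dots> \<le> (p 0 - c) / c"
      using lower[of N] \<open>0 < c\<close> by (intro divide_right_mono) auto
    finally show ?thesis .
  qed
  have "summable (\<lambda>k. (p k - p (Suc k)) / p k)"
    by (rule summableI_nonneg_bounded[OF nonneg partial_le])
  with partial_le show ?thesis
    using suminf_le_const by blast
qed

lemma prob_space_iidP:
  assumes "\<And>w. prob_space (P w)"
  shows "prob_space (iidP P v)"
  unfolding iidP_def by (rule prob_space_PiM) (rule assms)

lemma measurable_test_out:
  assumes sets_P: "sets (P v) = sets M"
    and meas_T: "T k \<in> measurable (\<Pi>\<^sub>M i\<in>{..<n k}. M) (count_space UNIV)"
  shows "test_out T n k \<in> measurable (iidP P v) (count_space UNIV)"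
proof -
  have "(\<lambda>\<omega>. restrict \<omega> {..<n k}) \<in> measurable (iidP P v) (\<Pi>\<^sub>M i\<in>{..<n k}. P v)"
    unfolding iidP_def by (rule measurable_restrict_subset) simp
  also have "\<dots> = measurable (iidP P v) (\<Pi>\<^sub>M i\<in>{..<n k}. M)"
    by (rule measurable_cong_sets) (auto intro!: sets_PiM_cong simp: sets_P)
  finally show ?thesis
    using measurable_comp[OF _ meas_T] unfolding test_out_def[abs_def] comp_def by blast
qed

definition correct_upto ::
  "((nat \<Rightarrow> bool) \<Rightarrow> 'a measure) \<Rightarrow> (nat \<Rightarrow> nat) \<Rightarrow> (nat \<Rightarrow> (nat \<Rightarrow> 'a) \<Rightarrow> bool) \<Rightarrow> (nat \<Rightarrow> bool) \<Rightarrow> nat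
    \<Rightarrow> (nat \<Rightarrow> 'a) set" where
  "correct_upto P n T v k = {\<omega> \<in> space (iidP P v). \<forall>j<k. test_out T n j \<omega> = v j}"

lemma correct_upto_Suc:
  "correct_upto P n T v (Suc k) = correct_upto P n T v k \<inter> {\<omega>. test_out T n k \<omega> = v k}"
  unfolding correct_upto_def using less_Suc_eq by auto

lemma correct_upto_Suc_subset: "correct_upto P n T v (Suc k) \<subseteq> correct_upto P n T v k"
  unfolding correct_upto_Suc by blast

lemma correct_upto_sets:
  assumes "\<And>j. test_out T n j \<in> measurable (iidP P v) (count_space UNIV)"
  shows "correct_upto P n T v k \<in> sets (iidP P v)"
proof (induction k)
  case 0
  show ?case by (simp add: correct_upto_def)
next
  case (Suc k)
  have "correct_upto P n T v (Suc k) =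
      correct_upto P n T v k \<inter> (test_out T n k -` {v k} \<inter> space (iidP P v))"
    unfolding correct_upto_Suc by (auto simp: correct_upto_def)
  with Suc show ?case
    using measurable_sets[OF assms, of "{v k}"] by auto
qed

lemma CondErr_eq_relative_decrement:
  assumes "prob_space (iidP P v)"
    and "\<And>j. test_out T n j \<in> measurable (iidP P v) (count_space UNIV)"
  shows "CondErr P n T v k =
    (measure (iidP P v) (correct_upto P n T v k) - measure (iidP P v) (correct_upto P n T v (Suc k)))
      / measure (iidP P v) (correct_upto P n T v k)"
proof -
  interpret prob_space "iidP P v" by fact
  have "{\<omega> \<in> space (iidP P v). (\<forall>j<k. test_out T n j \<omega> = v j) \<and> test_out T n k \<omega> \<noteq> v k}
      = correct_upto P n T v k - correct_upto P n T v (Suc k)"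
    unfolding correct_upto_Suc by (auto simp: correct_upto_def)
  moreover have "prob (correct_upto P n T v k - correct_upto P n T v (Suc k))
      = prob (correct_upto P n T v k) - prob (correct_upto P n T v (Suc k))"
    using correct_upto_sets[OF assms(2)] correct_upto_Suc_subset
    by (intro finite_measure_Diff)
  ultimately show ?thesis
    unfolding CondErr_def correct_upto_def[symmetric] by simp
qed

theorem lemma6:
  fixes P :: "(nat \<Rightarrow> bool) \<Rightarrow> 'a measure"
    and M :: "'a measure"
    and \<alpha> :: real
    and n :: "nat \<Rightarrow> nat"
    and T :: "nat \<Rightarrow> (nat \<Rightarrow> 'a) \<Rightarrow> bool"
    and v :: "nat \<Rightarrow> bool"
  assumes prob: "\<And>w. prob_space (P w)"
    and sets_P: "\<And>w. sets (P w) = sets M"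
    and meas_T: "\<And>k. T k \<in> measurable (\<Pi>\<^sub>M i\<in>{..<n k}. M) (count_space UNIV)"
    and alpha: "0 \<le> \<alpha>" "\<alpha> < 1"
    and test: "is_alpha_test P \<alpha> n T"
  shows "summable (\<lambda>k. CondErr P n T v k) \<and> (\<Sum>k. CondErr P n T v k) \<le> \<alpha> / (1 - \<alpha>)"
proof -
  interpret prob_space "iidP P v" using prob by (rule prob_space_iidP)
  have meas: "\<And>j. test_out T n j \<in> measurable (iidP P v) (count_space UNIV)"
    using sets_P meas_T by (rule measurable_test_out)
  define p where "p k = prob (correct_upto P n T v k)" for k
  have p_dec: "p (Suc k) \<le> p k" for k
    unfolding p_def using correct_upto_Suc_subset correct_upto_sets[OF meas]
    by (rule finite_measure_mono)
  have p_lower: "1 - \<alpha> \<le> p k" for k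
  proof -
    have "1 - \<alpha> \<le> prob {\<omega> \<in> space (iidP P v). \<forall>k. test_out T n k \<omega> = v k}"
      using test unfolding is_alpha_test_def by blast
    also have "\<dots> \<le> p k"
      unfolding p_def using _ correct_upto_sets[OF meas]
      by (rule finite_measure_mono) (auto simp: correct_upto_def)
    finally show ?thesis .
  qed
  have "CondErr P n T v = (\<lambda>k. (p k - p (Suc k)) / p k)"
    unfolding p_def by (rule ext, rule CondErr_eq_relative_decrement[OF prob_space_axioms meas])
  moreover have "summable (\<lambda>k. (p k - p (Suc k)) / p k) \<and>
      (\<Sum>k. (p k - p (Suc k)) / p k) \<le> (p 0 - (1 - \<alpha>)) / (1 - \<alpha>)"
    using p_dec p_lower alpha by (intro relative_decrements_summable_le) auto
  moreover have "(p 0 - (1 - \<alpha>)) / (1 - \<alpha>) \<le> \<alpha> / (1 - \<alpha>)"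
    using alpha by (intro divide_right_mono) (auto simp: p_def)
  ultimately show ?thesis
    by auto
qed

end
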